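(* Let $\Omega$ be a finite set with $|\Omega|=n$, $(H_i\mid i\in\Omega)$ finite abelian groups with $|H_i|\geqslant2$ for all $i$, $\mathbf{H}=\prod_{i\in\Omega}H_i$, and $\mathbf{P}=(\Omega,\preccurlyeq_{\mathbf{P}})$ a poset. Then $\mathbf{P}$ is hierarchical if and only if for all $\alpha,\gamma\in\hat{\mathbf{H}}$, $\mathrm{wt}_{\overline{\mathbf{P}}}(\alpha)=\mathrm{wt}_{\overline{\mathbf{P}}}(\gamma)$ implies $\deg(F(\alpha))=\deg(F(\gamma))$.
   Context: $\hat{\mathbf{H}}$ is the character group of $\mathbf{H}$, identified with $\prod_i\hat{H_i}$ via $\alpha(\beta)=\prod_i\alpha_{(i)}(\beta_{(i)})$; $\mathrm{supp}$ of a codeword is the set of coordinates where it is not the identity. For a poset $\mathbf{Q}$ on $\Omega$, $\langle B\rangle_{\mathbf{Q}}=\{a:\exists b\in B, a\preccurlyeq_{\mathbf{Q}}b\}$ and $\mathrm{wt}_{\mathbf{Q}}(\beta)=|\langle\mathrm{supp}(\beta)\rangle_{\mathbf{Q}}|$. $\overline{\mathbf{P}}$ is the dual poset. For $\alpha\in\hat{\mathbf{H}}$, $F(\alpha)=\sum_{l=0}^{n}\big(\sum_{\beta\in\mathbf{H},\ \mathrm{wt}_{\mathbf{P}}(\beta)=l}\alpha(\beta)\big)x^l\in\mathbb{C}[x]$. $\mathrm{len}(y)$ is the largest cardinality of a chain in $\mathbf{P}$ with greatest element $y$; $\mathbf{P}$ is hierarchical if $\mathrm{len}(u)+1\leqslant\mathrm{len}(v)$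 implies $u\preccurlyeq_{\mathbf{P}}v$. *)

theory Defs
  imports "HOL-Algebra.Group" "HOL-Computational_Algebra.Polynomial"
begin

definition is_poset :: "'b set \<Rightarrow> ('b \<Rightarrow> 'b \<Rightarrow> bool) \<Rightarrow> bool" where
  "is_poset \<Omega> leq \<longleftrightarrow>
     (\<forall>a\<in>\<Omega>. leq a a) \<and>
     (\<forall>a\<in>\<Omega>. \<forall>b\<in>\<Omega>. leq a b \<and> leq b a \<longrightarrow> a = b) \<and>
     (\<forall>a\<in>\<Omega>. \<forall>b\<in>\<Omega>. \<forall>c\<in>\<Omega>. leq a b \<and> leq b c \<longrightarrow> leq a c)"

definition dual_order :: "('b \<Rightarrow> 'b \<Rightarrow> bool) \<Rightarrow> 'b \<Rightarrow> 'b \<Rightarrow> bool" where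
  "dual_order leq a b = leq b a"

definition ideal_gen :: "'b set \<Rightarrow> ('b \<Rightarrow> 'b \<Rightarrow> bool) \<Rightarrow> 'b set \<Rightarrow> 'b set" where
  "ideal_gen \<Omega> leq B = {a\<in>\<Omega>. \<exists>b\<in>B. leq a b}"

definition chain_top :: "'b set \<Rightarrow> ('b \<Rightarrow> 'b \<Rightarrow> bool) \<Rightarrow> 'b \<Rightarrow> 'b set \<Rightarrow> bool" where
  "chain_top \<Omega> leq y C \<longleftrightarrow> C \<subseteq> \<Omega> \<and> y \<in> C \<and>
     (\<forall>a\<in>C. \<forall>b\<in>C. leq a b \<or> leq b a) \<and> (\<forall>c\<in>C. leq c y)"

definition len :: "'b set \<Rightarrow> ('b \<Rightarrow> 'b \<Rightarrow> bool) \<Rightarrow> 'b \<Rightarrow> nat" where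
  "len \<Omega> leq y = Max (card ` {C. chain_top \<Omega> leq y C})"

definition hierarchical :: "'b set \<Rightarrow> ('b \<Rightarrow> 'b \<Rightarrow> bool) \<Rightarrow> bool" where
  "hierarchical \<Omega> leq \<longleftrightarrow>
     (\<forall>u\<in>\<Omega>. \<forall>v\<in>\<Omega>. len \<Omega> leq u + 1 \<le> len \<Omega> leq v \<longrightarrow> leq u v)"

definition codewords :: "'b set \<Rightarrow> ('b \<Rightarrow> ('a, 'c) monoid_scheme) \<Rightarrow> ('b \<Rightarrow> 'a) set" where
  "codewords \<Omega> G = (\<Pi>\<^sub>E i\<in>\<Omega>. carrier (G i))"

definition cw_supp :: "'b set \<Rightarrow> ('b \<Rightarrow> ('a, 'c) monoid_scheme) \<Rightarrow> ('b \<Rightarrow> 'a) \<Rightarrow> 'b set" where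
  "cw_supp \<Omega> G \<beta> = {i\<in>\<Omega>. \<beta> i \<noteq> \<one>\<^bsub>G i\<^esub>}"

definition wt :: "'b set \<Rightarrow> ('b \<Rightarrow> 'b \<Rightarrow> bool) \<Rightarrow> 'b set \<Rightarrow> nat" where
  "wt \<Omega> leq S = card (ideal_gen \<Omega> leq S)"

definition character :: "('a, 'c) monoid_scheme \<Rightarrow> ('a \<Rightarrow> complex) \<Rightarrow> bool" where
  "character G \<chi> \<longleftrightarrow> (\<forall>x\<in>carrier G. \<chi> x \<noteq> 0) \<and>
     (\<forall>x\<in>carrier G. \<forall>y\<in>carrier G. \<chi> (x \<otimes>\<^bsub>G\<^esub> y) = \<chi> x * \<chi> y)"

definition trivial_character :: "('a, 'c) monoid_scheme \<Rightarrow> ('a \<Rightarrow> complex) \<Rightarrow> bool" where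
  "trivial_character G \<chi> \<longleftrightarrow> (\<forall>x\<in>carrier G. \<chi> x = 1)"

text \<open>Characters of H, identified with families (alpha_i) of characters of the H_i.\<close>
definition char_family :: "'b set \<Rightarrow> ('b \<Rightarrow> ('a, 'c) monoid_scheme) \<Rightarrow> ('b \<Rightarrow> 'a \<Rightarrow> complex) \<Rightarrow> bool" where
  "char_family \<Omega> G \<alpha> \<longleftrightarrow> (\<forall>i\<in>\<Omega>. character (G i) (\<alpha> i))"

definition char_eval :: "'b set \<Rightarrow> ('b \<Rightarrow> 'a \<Rightarrow> complex) \<Rightarrow> ('b \<Rightarrow> 'a) \<Rightarrow> complex" where
  "char_eval \<Omega> \<alpha> \<beta> = (\<Prod>i\<in>\<Omega>. \<alpha> i (\<beta> i))"

definition char_supp :: "'b set \<Rightarrow> ('b \<Rightarrow> ('a, 'c) monoid_scheme) \<Rightarrow> ('b \<Rightarrow> 'a \<Rightarrow> complex) \<Rightarrow> 'b set" where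
  "char_supp \<Omega> G \<alpha> = {i\<in>\<Omega>. \<not> trivial_character (G i) (\<alpha> i)}"

definition F_poly :: "'b set \<Rightarrow> ('b \<Rightarrow> ('a, 'c) monoid_scheme) \<Rightarrow> ('b \<Rightarrow> 'b \<Rightarrow> bool)
    \<Rightarrow> ('b \<Rightarrow> 'a \<Rightarrow> complex) \<Rightarrow> complex poly" where
  "F_poly \<Omega> G leq \<alpha> =
     (\<Sum>l\<in>{0..card \<Omega>}.
        monom (\<Sum>\<beta>\<in>{\<beta>\<in>codewords \<Omega> G. wt \<Omega> leq (cw_supp \<Omega> G \<beta>) = l}. char_eval \<Omega> \<alpha> \<beta>) l)"

end

theory Submission
  imports Defs
begin

text \<open>
  Writing \<alpha>(\<beta>) as a product over the coordinates, the sum of \<alpha> over the codewords with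
  support T is the product of the e_i, i \<in> T, where e_i, the sum of \<alpha>_i over H_i - {1}, is -1
  if \<alpha>_i is nontrivial and |H_i| - 1 otherwise. The sets T generating a given down-set I are
  exactly those between max I and I, so the coefficient of x^l in F(\<alpha>) is a sum over the
  down-sets I with |I| = l of (\<Prod>i\<in>max I. e_i) * (\<Prod>i\<in>I - max I. 1 + e_i). This term
  vanishes exactly when a non-maximal element of I lies in the support S of \<alpha>, and the largest
  down-set avoiding that is (\<Omega> - up(S)) \<union> min S; hence deg F(\<alpha>) = n - wt_dual(\<alpha>) + |min S|.

  As every subset of \<Omega> is the support of a character, the theorem says that P is hierarchical
  iff |up(S)| determines |min S|. In a hierarchical poset up(S) consists of min S and all
  elements longer than the common length of min S, so |up(S)| determines that length and then
  |min S|. Otherwise there are x not below y whose strict up-sets satisfy U(y) \<subset> U(x), and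
  {x} and {y} \<union> U(x) generate up-sets of the same size but have one, resp. at least two,
  minimal elements.
\<close>

section \<open>Down-sets, up-sets and minimal elements\<close>

definition down_closed :: "'b set \<Rightarrow> ('b \<Rightarrow> 'b \<Rightarrow> bool) \<Rightarrow> 'b set \<Rightarrow> bool" where
  "down_closed \<Omega> leq I \<longleftrightarrow> I \<subseteq> \<Omega> \<and> (\<forall>x\<in>\<Omega>. \<forall>y\<in>I. leq x y \<longrightarrow> x \<in> I)"

definition minimal_elems :: "('b \<Rightarrow> 'b \<Rightarrow> bool) \<Rightarrow> 'b set \<Rightarrow> 'b set" where
  "minimal_elems leq S = {s\<in>S. \<forall>s'\<in>S. leq s' s \<longrightarrow> s' = s}"

definition maximal_elems :: "('b \<Rightarrow> 'b \<Rightarrow> bool) \<Rightarrow> 'b set \<Rightarrow> 'b set" where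
  "maximal_elems leq S = {s\<in>S. \<forall>s'\<in>S. leq s s' \<longrightarrow> s' = s}"

abbreviation upset :: "'b set \<Rightarrow> ('b \<Rightarrow> 'b \<Rightarrow> bool) \<Rightarrow> 'b set \<Rightarrow> 'b set" where
  "upset \<Omega> leq S \<equiv> ideal_gen \<Omega> (dual_order leq) S"

lemma mem_upset: "x \<in> upset \<Omega> leq S \<longleftrightarrow> x \<in> \<Omega> \<and> (\<exists>s\<in>S. leq s x)"
  by (auto simp: ideal_gen_def dual_order_def)

lemma finite_minimal_elems: "finite S \<Longrightarrow> finite (minimal_elems leq S)"
  by (simp add: minimal_elems_def)

lemma is_poset_refl: "is_poset \<Omega> leq \<Longrightarrow> a \<in> \<Omega> \<Longrightarrow> leq a a"
  unfolding is_poset_def by blast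

lemma is_poset_antisym:
  "is_poset \<Omega> leq \<Longrightarrow> a \<in> \<Omega> \<Longrightarrow> b \<in> \<Omega> \<Longrightarrow> leq a b \<Longrightarrow> leq b a \<Longrightarrow> a = b"
  unfolding is_poset_def by blast

lemma is_poset_trans:
  "is_poset \<Omega> leq \<Longrightarrow> a \<in> \<Omega> \<Longrightarrow> b \<in> \<Omega> \<Longrightarrow> c \<in> \<Omega> \<Longrightarrow> leq a b \<Longrightarrow> leq b c \<Longrightarrow> leq a c"
  unfolding is_poset_def by blast

lemma is_poset_dual_order: "is_poset \<Omega> leq \<Longrightarrow> is_poset \<Omega> (dual_order leq)"
  unfolding is_poset_def dual_order_def by blast

lemma ex_maximal_above:
  assumes P: "is_poset \<Omega> leq" and fin: "finite X" and X: "X \<subseteq> \<Omega>" and x: "x \<in> X"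
  obtains m where "m \<in> maximal_elems leq X" "leq x m"
proof -
  let ?above = "\<lambda>y. card {z\<in>X. leq y z}"
  obtain m where m: "m \<in> X" "leq x m"
    and least: "\<And>y. y \<in> X \<Longrightarrow> leq x y \<Longrightarrow> ?above m \<le> ?above y"
    using ex_has_least_nat[of "\<lambda>y. y \<in> X \<and> leq x y" x ?above] x X is_poset_refl[OF P]
    by blast
  have "s = m" if s: "s \<in> X" "leq m s" for s
  proof (rule ccontr)
    assume "s \<noteq> m"
    then have "m \<notin> {z\<in>X. leq s z}"
      using is_poset_antisym[OF P] m s X by blast
    moreover have "{z\<in>X. leq s z} \<subseteq> {z\<in>X. leq m z}"
      using is_poset_trans[OF P, of m s] m s X by blast
    ultimately have "?above s < ?above m"
      using fin m(1) X is_poset_refl[OF P, of m] by (intro psubset_card_mono) auto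
    moreover have "leq x s"
      using is_poset_trans[OF P, of x m s] m s X x by blast
    ultimately show False
      using least[OF s(1)] by simp
  qed
  then show thesis
    using that m by (auto simp: maximal_elems_def)
qed

lemma ex_minimal_below:
  assumes P: "is_poset \<Omega> leq" and fin: "finite X" and X: "X \<subseteq> \<Omega>" and x: "x \<in> X"
  obtains m where "m \<in> minimal_elems leq X" "leq m x"
  using ex_maximal_above[OF is_poset_dual_order[OF P] fin X x]
  unfolding maximal_elems_def minimal_elems_def dual_order_def by blast

lemma ideal_gen_down_closed:
  assumes P: "is_poset \<Omega> leq" and T: "T \<subseteq> \<Omega>"
  shows "down_closed \<Omega> leq (ideal_gen \<Omega> leq T)"
  using T is_poset_trans[OF P] unfolding down_closed_def ideal_gen_def by blast

lemma ideal_gen_eq_iff: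
  assumes P: "is_poset \<Omega> leq" and fin: "finite \<Omega>" and I: "down_closed \<Omega> leq I"
    and T: "T \<subseteq> \<Omega>"
  shows "ideal_gen \<Omega> leq T = I \<longleftrightarrow> maximal_elems leq I \<subseteq> T \<and> T \<subseteq> I"
proof
  assume eq: "ideal_gen \<Omega> leq T = I"
  then have TI: "T \<subseteq> I"
    using T is_poset_refl[OF P] unfolding ideal_gen_def by blast
  have "m \<in> T" if m: "m \<in> maximal_elems leq I" for m
  proof -
    obtain t where "t \<in> T" "leq m t"
      using m eq unfolding maximal_elems_def ideal_gen_def by blast
    then show ?thesis
      using m TI unfolding maximal_elems_def by blast
  qed
  with TI show "maximal_elems leq I \<subseteq> T \<and> T \<subseteq> I" by blast
next
  assume MT: "maximal_elems leq I \<subseteq> T \<and> T \<subseteq> I"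
  have "a \<in> ideal_gen \<Omega> leq T" if a: "a \<in> I" for a
  proof -
    have "finite I"
      using I fin finite_subset unfolding down_closed_def by blast
    then obtain m where "m \<in> maximal_elems leq I" "leq a m"
      using ex_maximal_above[OF P _ _ a] I unfolding down_closed_def by blast
    then show ?thesis
      using MT a I unfolding ideal_gen_def down_closed_def by blast
  qed
  then show "ideal_gen \<Omega> leq T = I"
    using MT I unfolding ideal_gen_def down_closed_def by blast
qed

lemma subset_upset: "is_poset \<Omega> leq \<Longrightarrow> S \<subseteq> \<Omega> \<Longrightarrow> S \<subseteq> upset \<Omega> leq S"
  using is_poset_refl by (fastforce simp: mem_upset)

lemma card_upset_eq_0_iff:
  assumes fin: "finite \<Omega>" and P: "is_poset \<Omega> leq" and S: "S \<subseteq> \<Omega>"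
  shows "card (upset \<Omega> leq S) = 0 \<longleftrightarrow> S = {}"
proof -
  have "finite (upset \<Omega> leq S)"
    using fin by (simp add: ideal_gen_def)
  then show ?thesis
    using subset_upset[OF P S] by (auto simp: mem_upset)
qed

lemma card_minimal_elems_pos:
  assumes fin: "finite \<Omega>" and P: "is_poset \<Omega> leq" and S: "S \<subseteq> \<Omega>" "S \<noteq> {}"
  shows "0 < card (minimal_elems leq S)"
proof -
  have finS: "finite S"
    using S(1) fin by (rule finite_subset)
  obtain x where "x \<in> S"
    using S(2) by blast
  then obtain s where "s \<in> minimal_elems leq S"
    using ex_minimal_below[OF P finS S(1)] by blast
  then show ?thesis
    using finite_minimal_elems[OF finS] card_gt_0_iff by blast
qed

text \<open>The largest down-set none of whose non-maximal elements lies in S.\<close>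

definition top_ideal :: "'b set \<Rightarrow> ('b \<Rightarrow> 'b \<Rightarrow> bool) \<Rightarrow> 'b set \<Rightarrow> 'b set" where
  "top_ideal \<Omega> leq S = (\<Omega> - upset \<Omega> leq S) \<union> minimal_elems leq S"

lemma top_ideal_down_closed:
  assumes P: "is_poset \<Omega> leq" and S: "S \<subseteq> \<Omega>"
  shows "down_closed \<Omega> leq (top_ideal \<Omega> leq S)"
  unfolding down_closed_def
proof (intro conjI ballI impI)
  show "top_ideal \<Omega> leq S \<subseteq> \<Omega>"
    using S unfolding top_ideal_def minimal_elems_def by blast
next
  fix x y assume x: "x \<in> \<Omega>" and y: "y \<in> top_ideal \<Omega> leq S" and xy: "leq x y"
  show "x \<in> top_ideal \<Omega> leq S"
  proof (cases "x \<in> upset \<Omega> leq S")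
    case True
    then obtain s where s: "s \<in> S" "leq s x"
      by (auto simp: mem_upset)
    have yO: "y \<in> \<Omega>"
      using y S unfolding top_ideal_def minimal_elems_def by blast
    then have "y \<in> upset \<Omega> leq S"
      using s x S is_poset_trans[OF P, of s x y] xy by (auto simp: mem_upset)
    then have "y \<in> minimal_elems leq S"
      using y unfolding top_ideal_def by blast
    then have "y = s"
      using s x yO S is_poset_trans[OF P, of s x y] xy unfolding minimal_elems_def by blast
    then have "x = y"
      using is_poset_antisym[OF P x yO] s xy by blast
    then show ?thesis
      using y by simp
  qed (use x in \<open>simp add: top_ideal_def\<close>)
qed

lemma card_top_ideal:
  assumes fin: "finite \<Omega>" and P: "is_poset \<Omega> leq" and S: "S \<subseteq> \<Omega>"
  shows "card (top_ideal \<Omega> leq S) = card \<Omega> - card (upset \<Omega> leq S) + card (minimal_elems leq S)"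
proof -
  have "minimal_elems leq S \<subseteq> upset \<Omega> leq S"
    using subset_upset[OF P S] by (auto simp: minimal_elems_def)
  moreover have "finite (minimal_elems leq S)"
    using S fin finite_subset finite_minimal_elems by blast
  moreover have "upset \<Omega> leq S \<subseteq> \<Omega>"
    by (auto simp: mem_upset)
  ultimately show ?thesis
    unfolding top_ideal_def using fin
    by (subst card_Un_disjoint) (auto simp: card_Diff_subset finite_subset)
qed

lemma subset_top_ideal_iff:
  assumes P: "is_poset \<Omega> leq" and S: "S \<subseteq> \<Omega>" and I: "down_closed \<Omega> leq I"
  shows "I \<subseteq> top_ideal \<Omega> leq S \<longleftrightarrow> S \<inter> (I - maximal_elems leq I) = {}"
proof
  assume IJ: "I \<subseteq> top_ideal \<Omega> leq S"
  have "s \<in> maximal_elems leq I" if s: "s \<in> S" "s \<in> I" for s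
  proof -
    have "j \<in> minimal_elems leq S" if j: "j \<in> I" "leq s j" for j
      using IJ j s I unfolding top_ideal_def down_closed_def by (auto simp: mem_upset)
    then show ?thesis
      using s unfolding maximal_elems_def minimal_elems_def by blast
  qed
  then show "S \<inter> (I - maximal_elems leq I) = {}" by blast
next
  assume good: "S \<inter> (I - maximal_elems leq I) = {}"
  show "I \<subseteq> top_ideal \<Omega> leq S"
  proof
    fix y assume y: "y \<in> I"
    have max_below: "s' \<in> maximal_elems leq I" if "s' \<in> S" "leq s' y" for s'
      using good I that y S unfolding down_closed_def by blast
    show "y \<in> top_ideal \<Omega> leq S"
    proof (cases "y \<in> upset \<Omega> leq S")
      case True
      then obtain s where s: "s \<in> S" "leq s y"
        by (auto simp: mem_upset)
      then have "s = y"
        using max_below y unfolding maximal_elems_def by blast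
      then have "y \<in> minimal_elems leq S"
        using s max_below y unfolding minimal_elems_def maximal_elems_def by blast
      then show ?thesis
        unfolding top_ideal_def by blast
    qed (use y I in \<open>auto simp: top_ideal_def down_closed_def\<close>)
  qed
qed

section \<open>Chain lengths and hierarchical posets\<close>

lemma finite_chain_tops: "finite \<Omega> \<Longrightarrow> finite {C. chain_top \<Omega> leq y C}"
  by (rule finite_subset[of _ "Pow \<Omega>"]) (auto simp: chain_top_def)

lemma card_le_len:
  assumes fin: "finite \<Omega>" and C: "chain_top \<Omega> leq y C"
  shows "card C \<le> len \<Omega> leq y"
  unfolding len_def using C finite_chain_tops[OF fin] by (intro Max_ge) auto

lemma obtain_chain_len:
  assumes fin: "finite \<Omega>" and P: "is_poset \<Omega> leq" and y: "y \<in> \<Omega>"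
  obtains C where "chain_top \<Omega> leq y C" "card C = len \<Omega> leq y"
proof -
  have "chain_top \<Omega> leq y {y}"
    using is_poset_refl[OF P y] y unfolding chain_top_def by auto
  then have "len \<Omega> leq y \<in> card ` {C. chain_top \<Omega> leq y C}"
    unfolding len_def using finite_chain_tops[OF fin] by (intro Max_in) auto
  then show thesis
    using that by auto
qed

lemma len_strict_mono:
  assumes fin: "finite \<Omega>" and P: "is_poset \<Omega> leq" and x: "x \<in> \<Omega>" and y: "y \<in> \<Omega>"
    and xy: "leq x y" "x \<noteq> y"
  shows "len \<Omega> leq x < len \<Omega> leq y"
proof -
  obtain C where C: "chain_top \<Omega> leq x C" "card C = len \<Omega> leq x"
    using obtain_chain_len[OF fin P x] .
  have CO: "C \<subseteq> \<Omega>" and below_x: "\<And>c. c \<in> C \<Longrightarrow> leq c x"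
    using C unfolding chain_top_def by auto
  have below_y: "leq c y" if "c \<in> C" for c
    using is_poset_trans[OF P _ x y] below_x[OF that] that CO xy by blast
  have "y \<notin> C"
    using below_x is_poset_antisym[OF P x y] xy by blast
  then have "card (insert y C) = card C + 1"
    using finite_subset[OF CO fin] by simp
  moreover have "chain_top \<Omega> leq y (insert y C)"
    using C CO y below_y is_poset_refl[OF P y] unfolding chain_top_def by blast
  ultimately show ?thesis
    using card_le_len[OF fin] C by fastforce
qed

lemma len_mono:
  assumes fin: "finite \<Omega>" and P: "is_poset \<Omega> leq" and x: "x \<in> \<Omega>" and y: "y \<in> \<Omega>"
    and xy: "leq x y"
  shows "len \<Omega> leq x \<le> len \<Omega> leq y"
  using len_strict_mono[OF assms] by (cases "x = y") auto

lemma Min_len_le_of_mem_upset: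
  assumes fin: "finite \<Omega>" and P: "is_poset \<Omega> leq" and S: "S \<subseteq> \<Omega>"
    and x: "x \<in> upset \<Omega> leq S"
  shows "Min (len \<Omega> leq ` S) \<le> len \<Omega> leq x"
proof -
  obtain s where s: "s \<in> S" "leq s x" "x \<in> \<Omega>"
    using x by (auto simp: mem_upset)
  have "Min (len \<Omega> leq ` S) \<le> len \<Omega> leq s"
    using s(1) S fin finite_subset by (intro Min_le) auto
  also have "\<dots> \<le> len \<Omega> leq x"
    using len_mono[OF fin P _ s(3) s(2)] s(1) S by blast
  finally show ?thesis .
qed

lemma len_minimal_elems_hierarchical:
  assumes fin: "finite \<Omega>" and H: "hierarchical \<Omega> leq"
    and S: "S \<subseteq> \<Omega>" and s: "s \<in> minimal_elems leq S"
  shows "len \<Omega> leq s = Min (len \<Omega> leq ` S)"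
proof (rule ccontr)
  let ?m = "Min (len \<Omega> leq ` S)"
  assume ne: "len \<Omega> leq s \<noteq> ?m"
  have finS: "finite S"
    using S fin by (rule finite_subset)
  have sS: "s \<in> S"
    using s unfolding minimal_elems_def by blast
  then have "?m \<in> len \<Omega> leq ` S" "?m \<le> len \<Omega> leq s"
    using finS by (auto intro: Min_in Min_le)
  then obtain s0 where "s0 \<in> S" "len \<Omega> leq s0 + 1 \<le> len \<Omega> leq s"
    using ne by force
  then have "leq s0 s"
    using H S sS unfolding hierarchical_def by blast
  then show False
    using s ne \<open>s0 \<in> S\<close> \<open>len \<Omega> leq s0 + 1 \<le> len \<Omega> leq s\<close>
    unfolding minimal_elems_def by force
qed

lemma upset_hierarchical:
  assumes fin: "finite \<Omega>" and P: "is_poset \<Omega> leq" and H: "hierarchical \<Omega> leq"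
    and S: "S \<subseteq> \<Omega>" "S \<noteq> {}"
  defines "m \<equiv> Min (len \<Omega> leq ` S)"
  shows "upset \<Omega> leq S = minimal_elems leq S \<union> {x\<in>\<Omega>. m < len \<Omega> leq x}"
proof -
  have finS: "finite S"
    using S fin finite_subset by blast
  have m_le: "m \<le> len \<Omega> leq s" if "s \<in> S" for s
    unfolding m_def using finS that by (intro Min_le) auto
  have "m \<in> len \<Omega> leq ` S"
    unfolding m_def using finS S by (intro Min_in) auto
  then obtain s0 where s0: "s0 \<in> S" "len \<Omega> leq s0 = m"
    by auto
  have "x \<in> minimal_elems leq S"
    if x: "x \<in> upset \<Omega> leq S" and low: "\<not> m < len \<Omega> leq x" for x
  proof -
    have below_x_short: "len \<Omega> leq s < m" if "s \<in> S" "leq s x" "s \<noteq> x" for s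
      using len_strict_mono[OF fin P _ _ that(2,3)] that(1) S x low by (auto simp: mem_upset)
    obtain s where s: "s \<in> S" "leq s x"
      using x by (auto simp: mem_upset)
    then have "s = x"
      using below_x_short m_le by (meson leD)
    then show ?thesis
      using s below_x_short m_le leD unfolding minimal_elems_def by blast
  qed
  moreover have "x \<in> upset \<Omega> leq S" if "x \<in> \<Omega>" "m < len \<Omega> leq x" for x
    using H s0 S that unfolding hierarchical_def by (force simp: mem_upset)
  moreover have "minimal_elems leq S \<subseteq> upset \<Omega> leq S" "upset \<Omega> leq S \<subseteq> \<Omega>"
    using subset_upset[OF P S(1)] by (auto simp: minimal_elems_def mem_upset)
  ultimately show ?thesis
    by blast
qed

lemma card_upset_hierarchical:
  assumes fin: "finite \<Omega>" and P: "is_poset \<Omega> leq" and H: "hierarchical \<Omega> leq"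
    and S: "S \<subseteq> \<Omega>" "S \<noteq> {}"
  shows "card (upset \<Omega> leq S) =
    card (minimal_elems leq S) + card {x\<in>\<Omega>. Min (len \<Omega> leq ` S) < len \<Omega> leq x}"
  unfolding upset_hierarchical[OF assms]
  using len_minimal_elems_hierarchical[OF fin H S(1)] finite_subset[OF S(1) fin] fin
  by (intro card_Un_disjoint finite_minimal_elems) force+

lemma card_upset_less_hierarchical:
  assumes fin: "finite \<Omega>" and P: "is_poset \<Omega> leq" and H: "hierarchical \<Omega> leq"
    and S: "S \<subseteq> \<Omega>" "S \<noteq> {}" and S': "S' \<subseteq> \<Omega>"
    and lt: "Min (len \<Omega> leq ` S) < Min (len \<Omega> leq ` S')"
  shows "card (upset \<Omega> leq S') < card (upset \<Omega> leq S)"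
proof -
  let ?above = "{x\<in>\<Omega>. Min (len \<Omega> leq ` S) < len \<Omega> leq x}"
  have "upset \<Omega> leq S' \<subseteq> ?above"
  proof
    fix x assume x: "x \<in> upset \<Omega> leq S'"
    then have "Min (len \<Omega> leq ` S') \<le> len \<Omega> leq x"
      by (rule Min_len_le_of_mem_upset[OF fin P S'])
    with x lt show "x \<in> ?above"
      by (simp add: mem_upset)
  qed
  then have "card (upset \<Omega> leq S') \<le> card ?above"
    using fin by (intro card_mono) auto
  then show ?thesis
    using card_upset_hierarchical[OF fin P H S] card_minimal_elems_pos[OF fin P S] by simp
qed

lemma hierarchical_card_minimal_elems_eq:
  assumes fin: "finite \<Omega>" and P: "is_poset \<Omega> leq" and H: "hierarchical \<Omega> leq"
    and S: "S \<subseteq> \<Omega>" and S': "S' \<subseteq> \<Omega>"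
    and eq: "card (upset \<Omega> leq S) = card (upset \<Omega> leq S')"
  shows "card (minimal_elems leq S) = card (minimal_elems leq S')"
proof (cases "S = {}")
  case True
  then have "S' = {}"
    using card_upset_eq_0_iff[OF fin P S] card_upset_eq_0_iff[OF fin P S'] eq by simp
  with True show ?thesis
    by simp
next
  case False
  then have ne: "S \<noteq> {}" "S' \<noteq> {}"
    using card_upset_eq_0_iff[OF fin P S] card_upset_eq_0_iff[OF fin P S'] eq by auto
  have "Min (len \<Omega> leq ` S) = Min (len \<Omega> leq ` S')"
    using card_upset_less_hierarchical[OF fin P H S ne(1) S']
      card_upset_less_hierarchical[OF fin P H S' ne(2) S] eq
    by (metis less_irrefl linorder_neqE_nat)
  then show ?thesis
    using card_upset_hierarchical[OF fin P H S ne(1)] card_upset_hierarchical[OF fin P H S' ne(2)] eq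
    by simp
qed

definition strict_upset :: "'b set \<Rightarrow> ('b \<Rightarrow> 'b \<Rightarrow> bool) \<Rightarrow> 'b \<Rightarrow> 'b set" where
  "strict_upset \<Omega> leq x = {z\<in>\<Omega>. leq x z \<and> z \<noteq> x}"

lemma strict_upset_psubset:
  assumes P: "is_poset \<Omega> leq" and x: "x \<in> \<Omega>" and z: "z \<in> \<Omega>" and xz: "leq x z" "x \<noteq> z"
  shows "strict_upset \<Omega> leq z \<subset> strict_upset \<Omega> leq x"
proof -
  have "strict_upset \<Omega> leq z \<subseteq> strict_upset \<Omega> leq x"
    using is_poset_trans[OF P x z] is_poset_antisym[OF P x z] xz
    unfolding strict_upset_def by blast
  moreover have "z \<in> strict_upset \<Omega> leq x" "z \<notin> strict_upset \<Omega> leq z"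
    using z xz unfolding strict_upset_def by auto
  ultimately show ?thesis by blast
qed

lemma strict_upsets_linear:
  assumes fin: "finite \<Omega>" and P: "is_poset \<Omega> leq"
    and no_inversion: "\<And>x y. x \<in> \<Omega> \<Longrightarrow> y \<in> \<Omega> \<Longrightarrow>
      strict_upset \<Omega> leq y \<subset> strict_upset \<Omega> leq x \<Longrightarrow> leq x y"
    and x: "x \<in> \<Omega>" and y: "y \<in> \<Omega>"
  shows "strict_upset \<Omega> leq x \<subseteq> strict_upset \<Omega> leq y \<or>
    strict_upset \<Omega> leq y \<subseteq> strict_upset \<Omega> leq x"
  using x
proof (induction "card (strict_upset \<Omega> leq x)" arbitrary: x rule: less_induct)
  case less
  let ?U = "strict_upset \<Omega> leq"
  show ?case
  proof (rule ccontr)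
    assume incomparable: "\<not> (?U x \<subseteq> ?U y \<or> ?U y \<subseteq> ?U x)"
    then obtain z where z: "z \<in> ?U x" "z \<notin> ?U y" by blast
    then have zO: "z \<in> \<Omega>" and xz: "leq x z" "x \<noteq> z"
      unfolding strict_upset_def by auto
    have zx: "?U z \<subset> ?U x"
      by (rule strict_upset_psubset[OF P less.prems zO xz])
    then have "card (?U z) < card (?U x)"
      using fin by (simp add: psubset_card_mono strict_upset_def)
    then have "?U z \<subseteq> ?U y \<or> ?U y \<subseteq> ?U z"
      using less.hyps zO by blast
    moreover have "\<not> ?U z \<subset> ?U y"
    proof
      assume zy: "?U z \<subset> ?U y"
      then have "z \<noteq> y" by blast
      with no_inversion[OF y zO zy] have "z \<in> ?U y"
        using zO unfolding strict_upset_def by blast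
      with z(2) show False ..
    qed
    ultimately show False
      using zx incomparable by blast
  qed
qed

lemma hierarchicalI_no_strict_upset_inversion:
  assumes fin: "finite \<Omega>" and P: "is_poset \<Omega> leq"
    and no_inversion: "\<And>x y. x \<in> \<Omega> \<Longrightarrow> y \<in> \<Omega> \<Longrightarrow>
      strict_upset \<Omega> leq y \<subset> strict_upset \<Omega> leq x \<Longrightarrow> leq x y"
  shows "hierarchical \<Omega> leq"
  unfolding hierarchical_def
proof (intro ballI impI)
  fix u v assume u: "u \<in> \<Omega>" and v: "v \<in> \<Omega>" and lt: "len \<Omega> leq u + 1 \<le> len \<Omega> leq v"
  let ?U = "strict_upset \<Omega> leq"
  show "leq u v"
  proof (rule ccontr)
    assume nuv: "\<not> leq u v"
    obtain C where C: "chain_top \<Omega> leq v C" "card C = len \<Omega> leq v"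
      using obtain_chain_len[OF fin P v] .
    have CO: "C \<subseteq> \<Omega>" and vC: "v \<in> C" and below_v: "\<And>c. c \<in> C \<Longrightarrow> leq c v"
      using C unfolding chain_top_def by auto
    have "?U u \<subseteq> ?U v"
      using strict_upsets_linear[OF fin P no_inversion u v] no_inversion[OF u v] nuv by blast
    text \<open>So u lies above the whole chain except its top v, and can replace v.\<close>
    then have below_u: "leq c u" if c: "c \<in> C - {v}" for c
      using strict_upset_psubset[OF P _ v below_v] no_inversion[OF _ u] c CO by blast
    have "chain_top \<Omega> leq u (insert u (C - {v}))"
      using C CO u below_u is_poset_refl[OF P u] unfolding chain_top_def by blast
    then have "card (insert u (C - {v})) \<le> len \<Omega> leq u"
      by (rule card_le_len[OF fin])
    moreover have "card (insert u (C - {v})) = card C"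
      using finite_subset[OF CO fin] vC below_v nuv
      by (metis card_Suc_Diff1 card_insert_disjoint finite_Diff Diff_iff)
    ultimately show False
      using C lt by simp
  qed
qed

lemma upset_singleton:
  "is_poset \<Omega> leq \<Longrightarrow> x \<in> \<Omega> \<Longrightarrow> upset \<Omega> leq {x} = insert x (strict_upset \<Omega> leq x)"
  using is_poset_refl by (auto simp: mem_upset strict_upset_def)

lemma upset_insert_strict_upset:
  assumes P: "is_poset \<Omega> leq" and x: "x \<in> \<Omega>" and y: "y \<in> \<Omega>"
    and sub: "strict_upset \<Omega> leq y \<subseteq> strict_upset \<Omega> leq x"
  defines "S \<equiv> insert y (strict_upset \<Omega> leq x)"
  shows "upset \<Omega> leq S = S"
proof -
  have "a \<in> S" if a: "a \<in> \<Omega>" and b: "b \<in> S" "leq b a" "a \<noteq> b" for a b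
  proof (cases "b = y")
    case True
    then show ?thesis
      using a b sub unfolding S_def strict_upset_def by blast
  next
    case False
    then have "b \<in> \<Omega>" "leq x b" "b \<noteq> x"
      using b unfolding S_def strict_upset_def by auto
    then show ?thesis
      using is_poset_trans[OF P x _ a] is_poset_antisym[OF P x] a b
      unfolding S_def strict_upset_def by blast
  qed
  then have "upset \<Omega> leq S \<subseteq> S"
    by (fastforce simp: mem_upset)
  moreover have "S \<subseteq> \<Omega>"
    using y unfolding S_def strict_upset_def by blast
  ultimately show ?thesis
    using subset_upset[OF P] by blast
qed

lemma strict_upset_inversion_witness:
  assumes fin: "finite \<Omega>" and P: "is_poset \<Omega> leq" and x: "x \<in> \<Omega>" and y: "y \<in> \<Omega>"
    and nxy: "\<not> leq x y" and inversion: "strict_upset \<Omega> leq y \<subset> strict_upset \<Omega> leq x"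
  defines "S \<equiv> insert y (strict_upset \<Omega> leq x)"
  shows "card (upset \<Omega> leq {x}) = card (upset \<Omega> leq S)"
    and "card (minimal_elems leq {x}) \<noteq> card (minimal_elems leq S)"
proof -
  let ?U = "strict_upset \<Omega> leq"
  have SO: "S \<subseteq> \<Omega>" and finU: "finite (?U x)" and yU: "y \<notin> ?U x"
    using y fin nxy unfolding S_def strict_upset_def by auto
  have "card (upset \<Omega> leq {x}) = Suc (card (?U x))"
    unfolding upset_singleton[OF P x] using finU by (simp add: strict_upset_def)
  moreover have "card (upset \<Omega> leq S) = Suc (card (?U x))"
    using upset_insert_strict_upset[OF P x y] inversion finU yU unfolding S_def by simp
  ultimately show "card (upset \<Omega> leq {x}) = card (upset \<Omega> leq S)"
    by simp
  have finS: "finite S"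
    using SO fin finite_subset by blast
  have y_min: "y \<in> minimal_elems leq S"
    using nxy is_poset_trans[OF P x _ y] unfolding S_def minimal_elems_def strict_upset_def by blast
  obtain z where z: "z \<in> ?U x" "z \<notin> ?U y"
    using inversion by blast
  then obtain m where m: "m \<in> minimal_elems leq S" "leq m z"
    using ex_minimal_below[OF P finS SO, of z] unfolding S_def by blast
  have "m \<noteq> y"
    using m z yU unfolding strict_upset_def by auto
  then have "card {y, m} \<le> card (minimal_elems leq S)"
    using y_min m finS by (intro card_mono finite_minimal_elems) auto
  moreover have "minimal_elems leq {x} = {x}"
    by (auto simp: minimal_elems_def)
  ultimately show "card (minimal_elems leq {x}) \<noteq> card (minimal_elems leq S)"
    using \<open>m \<noteq> y\<close> by simp
qed

definition upset_card_determines_minimal_card :: "'b set \<Rightarrow> ('b \<Rightarrow> 'b \<Rightarrow> bool) \<Rightarrow> bool" where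
  "upset_card_determines_minimal_card \<Omega> leq \<longleftrightarrow>
    (\<forall>S\<subseteq>\<Omega>. \<forall>S'\<subseteq>\<Omega>. card (upset \<Omega> leq S) = card (upset \<Omega> leq S') \<longrightarrow>
       card (minimal_elems leq S) = card (minimal_elems leq S'))"

lemma hierarchical_iff_upset_card_determines_minimal_card:
  assumes fin: "finite \<Omega>" and P: "is_poset \<Omega> leq"
  shows "hierarchical \<Omega> leq \<longleftrightarrow> upset_card_determines_minimal_card \<Omega> leq"
proof
  assume "hierarchical \<Omega> leq"
  then show "upset_card_determines_minimal_card \<Omega> leq"
    using hierarchical_card_minimal_elems_eq[OF fin P]
    unfolding upset_card_determines_minimal_card_def by blast
next
  assume determined: "upset_card_determines_minimal_card \<Omega> leq"
  have "leq x y" if x: "x \<in> \<Omega>" and y: "y \<in> \<Omega>"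
    and inversion: "strict_upset \<Omega> leq y \<subset> strict_upset \<Omega> leq x" for x y
  proof (rule ccontr)
    assume "\<not> leq x y"
    note witness = strict_upset_inversion_witness[OF fin P x y this inversion]
    have "insert y (strict_upset \<Omega> leq x) \<subseteq> \<Omega>"
      using y by (auto simp: strict_upset_def)
    then show False
      using determined witness x unfolding upset_card_determines_minimal_card_def by blast
  qed
  then show "hierarchical \<Omega> leq"
    by (rule hierarchicalI_no_strict_upset_inversion[OF fin P])
qed

section \<open>Characters of finite abelian groups\<close>

lemma (in group) character_one:
  assumes "character G \<chi>"
  shows "\<chi> \<one> = 1"
proof -
  have "\<chi> \<one> * \<chi> \<one> = \<chi> \<one> * 1" and "\<chi> \<one> \<noteq> 0"
    using assms one_closed l_one unfolding character_def by (metis mult_1_right)+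
  then show ?thesis
    by (metis mult_left_cancel)
qed

lemma (in group) sum_character:
  assumes fin: "finite (carrier G)" and \<chi>: "character G \<chi>"
  shows "(\<Sum>h\<in>carrier G. \<chi> h) = (if trivial_character G \<chi> then of_nat (card (carrier G)) else 0)"
proof (cases "trivial_character G \<chi>")
  case True
  then show ?thesis
    by (simp add: trivial_character_def)
next
  case False
  then obtain g where g: "g \<in> carrier G" "\<chi> g \<noteq> 1"
    unfolding trivial_character_def by blast
  text \<open>Translation by g permutes the group, so the sum is invariant under scaling by \<chi> g.\<close>
  have "(\<Sum>h\<in>carrier G. \<chi> h) = (\<Sum>h\<in>carrier G. \<chi> (g \<otimes> h))"
    using sum.reindex[OF inj_on_cmult[OF g(1)], of \<chi>] surj_const_mult[OF g(1)] by simp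
  also have "\<dots> = \<chi> g * (\<Sum>h\<in>carrier G. \<chi> h)"
    using \<chi> g(1) unfolding character_def by (simp add: sum_distrib_left)
  finally have "(1 - \<chi> g) * (\<Sum>h\<in>carrier G. \<chi> h) = 0"
    by (simp add: algebra_simps)
  with g(2) False show ?thesis
    by simp
qed

lemma (in group) sum_character_nonunit:
  assumes fin: "finite (carrier G)" and \<chi>: "character G \<chi>"
  shows "(\<Sum>h\<in>carrier G - {\<one>}. \<chi> h) =
    (if trivial_character G \<chi> then of_nat (card (carrier G)) - 1 else - 1)"
  using sum_character[OF assms] character_one[OF \<chi>] fin by (simp add: sum_diff1)

lemma (in group) ex_maximal_proper_subgroup:
  assumes fin: "finite (carrier G)" and nontrivial: "carrier G \<noteq> {\<one>}"
  obtains M where "subgroup M G" "M \<noteq> carrier G"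
    "\<And>H. subgroup H G \<Longrightarrow> M \<subset> H \<Longrightarrow> H = carrier G"
proof -
  let ?proper = "\<lambda>H. subgroup H G \<and> H \<noteq> carrier G"
  have "?proper {\<one>}"
    using triv_subgroup nontrivial by blast
  moreover have "\<forall>H. ?proper H \<longrightarrow> card H < Suc (card (carrier G))"
    using card_mono[OF fin subgroup.subset] by (simp add: less_Suc_eq_le)
  ultimately obtain M where M: "?proper M" and greatest: "\<And>H. ?proper H \<Longrightarrow> card H \<le> card M"
    using ex_has_greatest_nat[of ?proper "{\<one>}" card] by blast
  have "H = carrier G" if H: "subgroup H G" "M \<subset> H" for H
  proof (rule ccontr)
    assume "H \<noteq> carrier G"
    then have "card H \<le> card M"
      using greatest H(1) by blast
    moreover have "card M < card H"
      using finite_subset[OF subgroup.subset[OF H(1)] fin] H(2) by (rule psubset_card_mono)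
    ultimately show False
      by simp
  qed
  with M that show thesis
    by blast
qed

lemma (in group) ex_pos_pow_eq_one:
  assumes fin: "finite (carrier G)" and g: "g \<in> carrier G"
  obtains N :: nat where "0 < N" "g [^] N = \<one>"
proof -
  have "\<not> inj_on (\<lambda>k::nat. g [^] k) {..card (carrier G)}"
  proof
    assume "inj_on (\<lambda>k::nat. g [^] k) {..card (carrier G)}"
    then have "card {..card (carrier G)} \<le> card (carrier G)"
      using g by (intro card_inj_on_le[OF _ _ fin]) auto
    then show False
      by simp
  qed
  then obtain a b :: nat where "a < b" "g [^] b = g [^] a"
    unfolding inj_on_def by (metis linorder_neqE_nat)
  then show thesis
    using that[of "b - a"] pow_eq_div2[OF g] by simp
qed

lemma (in comm_group) subgroup_pow_mult:
  assumes fin: "finite (carrier G)" and M: "subgroup M G" and g: "g \<in> carrier G"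
  shows "subgroup {g [^] (k::nat) \<otimes> m |k m. m \<in> M} G"
proof -
  let ?T = "{g [^] (k::nat) \<otimes> m |k m. m \<in> M}"
  note Mc = subgroup.mem_carrier[OF M]
  obtain N :: nat where N: "0 < N" "g [^] N = \<one>"
    using ex_pos_pow_eq_one[OF fin g] .
  have inv_pow: "inv (g [^] k) = g [^] (k * (N - 1))" for k :: nat
  proof -
    have "g [^] (k * (N - 1)) \<otimes> g [^] k = g [^] (N * k)"
      using g N(1) by (simp add: nat_pow_mult algebra_simps)
    also have "\<dots> = \<one>"
      using g N(2) by (simp add: nat_pow_pow[symmetric])
    finally show ?thesis
      using g by (intro inv_equality) auto
  qed
  show ?thesis
  proof (rule subgroupI)
    show "?T \<subseteq> carrier G"
      using g Mc by auto
    show "?T \<noteq> {}"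
      using subgroup.one_closed[OF M] by blast
  next
    fix a assume "a \<in> ?T"
    then obtain k m where "m \<in> M" "a = g [^] (k::nat) \<otimes> m"
      by blast
    moreover have "inv (g [^] k \<otimes> m) = g [^] (k * (N - 1)) \<otimes> inv m"
      using g Mc[OF \<open>m \<in> M\<close>] by (simp add: inv_mult inv_pow)
    ultimately show "inv a \<in> ?T"
      using subgroup.m_inv_closed[OF M] by blast
  next
    fix a b assume "a \<in> ?T" "b \<in> ?T"
    then obtain k m j m' where "m \<in> M" "a = g [^] (k::nat) \<otimes> m" "m' \<in> M" "b = g [^] (j::nat) \<otimes> m'"
      by blast
    moreover have "g [^] k \<otimes> m \<otimes> (g [^] j \<otimes> m') = g [^] (k + j) \<otimes> (m \<otimes> m')"
      using g Mc calculation by (simp add: nat_pow_mult[symmetric] m_ac)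
    ultimately show "a \<otimes> b \<in> ?T"
      using subgroup.m_closed[OF M] by blast
  qed
qed

lemma (in comm_group) pow_mult_maximal_subgroup_eq_carrier:
  assumes fin: "finite (carrier G)" and M: "subgroup M G"
    and maximal: "\<And>H. subgroup H G \<Longrightarrow> M \<subset> H \<Longrightarrow> H = carrier G"
    and g: "g \<in> carrier G" "g \<notin> M"
  shows "carrier G = {g [^] (k::nat) \<otimes> m |k m. m \<in> M}"
proof -
  have "m \<in> {g [^] (k::nat) \<otimes> m |k m. m \<in> M}" if "m \<in> M" for m
    using that subgroup.mem_carrier[OF M] by (intro CollectI exI[of _ 0] exI[of _ m]) auto
  moreover have "g \<in> {g [^] (k::nat) \<otimes> m |k m. m \<in> M}"
    using g subgroup.one_closed[OF M] by (intro CollectI exI[of _ 1] exI[of _ \<one>]) auto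
  ultimately have "M \<subset> {g [^] (k::nat) \<otimes> m |k m. m \<in> M}"
    using g(2) by blast
  then show ?thesis
    using maximal subgroup_pow_mult[OF fin M g(1)] by simp
qed

lemma (in group) pow_mem_subgroup_iff_dvd:
  assumes M: "subgroup M G" and g: "g \<in> carrier G"
    and p: "0 < p" "g [^] p \<in> M" and least: "\<And>k. 0 < k \<Longrightarrow> k < p \<Longrightarrow> g [^] k \<notin> M"
  shows "g [^] (t::nat) \<in> M \<longleftrightarrow> p dvd t"
proof -
  have pow_p_mult: "g [^] (p * j) \<in> M" for j
    by (induction j) (use M p(2) g in \<open>simp_all add: subgroup.one_closed subgroup.m_closed
        nat_pow_mult[symmetric]\<close>)
  have "g [^] (t mod p) = inv (g [^] (p * (t div p))) \<otimes> g [^] t"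
    using g by (simp add: nat_pow_mult inv_solve_left)
  then have "g [^] t \<in> M \<Longrightarrow> g [^] (t mod p) \<in> M"
    using pow_p_mult subgroup.m_closed[OF M] subgroup.m_inv_closed[OF M] by simp
  then have "g [^] t \<in> M \<Longrightarrow> t mod p = 0"
    using least p(1) by (meson mod_less_divisor not_gr0)
  then show ?thesis
    using pow_p_mult by (auto simp: dvd_eq_mod_eq_0 elim!: dvdE)
qed

lemma (in group) ex_pow_mem_subgroup_iff_dvd:
  assumes fin: "finite (carrier G)" and M: "subgroup M G" and g: "g \<in> carrier G"
  obtains p :: nat where "0 < p" "\<And>t::nat. g [^] t \<in> M \<longleftrightarrow> p dvd t"
proof -
  define p where "p = (LEAST k::nat. 0 < k \<and> g [^] k \<in> M)"
  obtain N :: nat where "0 < N" "g [^] N = \<one>"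
    using ex_pos_pow_eq_one[OF fin g] .
  with subgroup.one_closed[OF M] have "0 < N \<and> g [^] N \<in> M"
    by simp
  then have p: "0 < p \<and> g [^] p \<in> M"
    unfolding p_def by (rule LeastI)
  have "g [^] k \<notin> M" if "0 < k" "k < p" for k
    using not_less_Least[of k "\<lambda>k. 0 < k \<and> g [^] k \<in> M"] that unfolding p_def by blast
  with p show thesis
    using that pow_mem_subgroup_iff_dvd[OF M g] by blast
qed

lemma (in group) pow_mult_subgroup_eq_imp_mod_eq:
  assumes M: "subgroup M G" and g: "g \<in> carrier G"
    and pow_mem_iff: "\<And>t::nat. g [^] t \<in> M \<longleftrightarrow> p dvd t"
    and eq: "g [^] a \<otimes> m = g [^] b \<otimes> m'" and m: "m \<in> M" "m' \<in> M"
  shows "a mod p = b mod p"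
proof -
  note Mc = subgroup.mem_carrier[OF M]
  have "a mod p = b mod p"
    if eq: "g [^] a \<otimes> m = g [^] b \<otimes> m'" and m: "m \<in> M" "m' \<in> M" and ba: "b \<le> a"
    for a b :: nat and m m'
  proof -
    have "g [^] b \<otimes> (g [^] (a - b) \<otimes> m) = g [^] b \<otimes> m'"
      using eq g m Mc ba by (simp add: m_assoc[symmetric] nat_pow_mult)
    then have "g [^] (a - b) = m' \<otimes> inv m"
      using g m Mc by (simp add: inv_solve_right)
    then have "g [^] (a - b) \<in> M"
      using M m by (simp add: subgroup.m_closed subgroup.m_inv_closed)
    then show ?thesis
      using pow_mem_iff ba by (simp add: mod_eq_dvd_iff_nat)
  qed
  from this[OF eq m] this[OF eq[symmetric] m(2,1)] show ?thesis
    by (cases "b \<le> a") auto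
qed

lemma exists_root_of_unity_ne_1:
  assumes "2 \<le> p"
  obtains \<omega> :: complex where "\<omega> ^ p = 1" "\<omega> \<noteq> 1"
proof -
  define f where "f k = cis (2 * pi * real k / real p)" for k :: nat
  have bij: "bij_betw f {..<p} {z. z ^ p = 1}"
    unfolding f_def using assms by (intro bij_betw_roots_unity) simp
  then have "f 1 ^ p = 1"
    using assms bij_betw_apply[OF bij, of 1] by simp
  moreover have "f 1 \<noteq> f 0"
    using assms inj_onD[OF bij_betw_imp_inj_on[OF bij], of 1 0] by auto
  ultimately show thesis
    using that by (simp add: f_def)
qed

lemma power_mod_eq_of_power_eq_1:
  fixes \<omega> :: "'a::monoid_mult"
  assumes "\<omega> ^ p = 1"
  shows "\<omega> ^ n = \<omega> ^ (n mod p)"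
proof -
  have "\<omega> ^ n = (\<omega> ^ p) ^ (n div p) * \<omega> ^ (n mod p)"
    unfolding power_mult[symmetric] power_add[symmetric] by simp
  with assms show ?thesis
    by simp
qed

lemma (in comm_group) character_of_pow_mult:
  assumes M: "subgroup M G" and g: "g \<in> carrier G"
    and span: "carrier G = {g [^] (k::nat) \<otimes> m |k m. m \<in> M}"
    and pow_mem_iff: "\<And>t::nat. g [^] t \<in> M \<longleftrightarrow> p dvd t"
    and \<omega>: "\<omega> ^ p = (1::complex)" and p: "0 < p"
  obtains \<chi> where "character G \<chi>" "\<And>k m. m \<in> M \<Longrightarrow> \<chi> (g [^] (k::nat) \<otimes> m) = \<omega> ^ k"
proof -
  have well_defined: "\<omega> ^ a = \<omega> ^ b"
    if "g [^] a \<otimes> m = g [^] b \<otimes> m'" "m \<in> M" "m' \<in> M" for a b :: nat and m m'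
    using pow_mult_subgroup_eq_imp_mod_eq[OF M g pow_mem_iff that] power_mod_eq_of_power_eq_1[OF \<omega>]
    by metis
  define \<chi> where "\<chi> x = \<omega> ^ (SOME k::nat. \<exists>m\<in>M. x = g [^] k \<otimes> m)" for x
  have \<chi>_eq: "\<chi> (g [^] k \<otimes> m) = \<omega> ^ k" if m: "m \<in> M" for k :: nat and m
  proof -
    let ?j = "SOME j::nat. \<exists>m'\<in>M. g [^] k \<otimes> m = g [^] j \<otimes> m'"
    have "\<exists>m'\<in>M. g [^] k \<otimes> m = g [^] ?j \<otimes> m'"
      by (rule someI_ex) (use m in blast)
    then obtain m' where "m' \<in> M" "g [^] k \<otimes> m = g [^] ?j \<otimes> m'"
      by blast
    then have "\<omega> ^ k = \<omega> ^ ?j"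
      using well_defined m by blast
    then show ?thesis
      unfolding \<chi>_def by simp
  qed
  have "\<omega> \<noteq> 0"
    using \<omega> p by (cases "\<omega> = 0") (simp_all add: power_0_left)
  have "character G \<chi>"
    unfolding character_def
  proof (intro conjI ballI)
    fix x y assume "x \<in> carrier G" "y \<in> carrier G"
    then obtain k m j m' where km: "m \<in> M" "x = g [^] (k::nat) \<otimes> m"
      and jm: "m' \<in> M" "y = g [^] (j::nat) \<otimes> m'"
      using span by blast
    then have "x \<otimes> y = g [^] (k + j) \<otimes> (m \<otimes> m')"
      using g subgroup.mem_carrier[OF M] by (simp add: nat_pow_mult[symmetric] m_ac)
    then show "\<chi> (x \<otimes> y) = \<chi> x * \<chi> y"
      using km jm \<chi>_eq subgroup.m_closed[OF M] by (simp add: power_add)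
  qed (use \<open>\<omega> \<noteq> 0\<close> in \<open>simp add: \<chi>_def\<close>)
  with \<chi>_eq that show thesis
    by blast
qed

lemma (in comm_group) exists_nontrivial_character:
  assumes fin: "finite (carrier G)" and card_ge_2: "2 \<le> card (carrier G)"
  shows "\<exists>\<chi>. character G \<chi> \<and> \<not> trivial_character G \<chi>"
proof -
  have "carrier G \<noteq> {\<one>}"
    using card_ge_2 by auto
  then obtain M where M: "subgroup M G" "M \<noteq> carrier G"
    and maximal: "\<And>H. subgroup H G \<Longrightarrow> M \<subset> H \<Longrightarrow> H = carrier G"
    using ex_maximal_proper_subgroup[OF fin] by blast
  obtain g where g: "g \<in> carrier G" "g \<notin> M"
    using M subgroup.subset by blast
  have one_M: "\<one> \<in> M"
    using M(1) by (rule subgroup.one_closed)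
  have span: "carrier G = {g [^] (k::nat) \<otimes> m |k m. m \<in> M}"
    using pow_mult_maximal_subgroup_eq_carrier[OF fin M(1) maximal g] .
  obtain p :: nat where p: "0 < p" and pow_mem_iff: "\<And>t::nat. g [^] t \<in> M \<longleftrightarrow> p dvd t"
    using ex_pow_mem_subgroup_iff_dvd[OF fin M(1) g(1)] by blast
  have "p \<noteq> 1"
    using pow_mem_iff[of 1] g by auto
  with p have "2 \<le> p"
    by linarith
  then obtain \<omega> :: complex where \<omega>: "\<omega> ^ p = 1" "\<omega> \<noteq> 1"
    by (rule exists_root_of_unity_ne_1)
  obtain \<chi> where \<chi>: "character G \<chi>"
    and \<chi>_eq: "\<And>k m. m \<in> M \<Longrightarrow> \<chi> (g [^] (k::nat) \<otimes> m) = \<omega> ^ k"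
    using character_of_pow_mult[OF M(1) g(1) span pow_mem_iff \<omega>(1) p] by blast
  have "\<chi> g = \<omega>"
    using \<chi>_eq[OF one_M, of 1] g by simp
  with \<chi> \<omega>(2) g(1) show ?thesis
    unfolding trivial_character_def by blast
qed

lemma char_family_with_supp:
  assumes CG: "\<And>i. i \<in> \<Omega> \<Longrightarrow> comm_group (G i)"
    and fin: "\<And>i. i \<in> \<Omega> \<Longrightarrow> finite (carrier (G i))"
    and card_ge_2: "\<And>i. i \<in> \<Omega> \<Longrightarrow> 2 \<le> card (carrier (G i))"
    and S: "S \<subseteq> \<Omega>"
  obtains \<alpha> where "char_family \<Omega> G \<alpha>" "char_supp \<Omega> G \<alpha> = S"
proof -
  have "\<forall>i\<in>\<Omega>. \<exists>\<chi>. character (G i) \<chi> \<and> \<not> trivial_character (G i) \<chi>"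
    using comm_group.exists_nontrivial_character[OF CG fin card_ge_2] by blast
  then obtain \<chi> where \<chi>: "\<And>i. i \<in> \<Omega> \<Longrightarrow> character (G i) (\<chi> i) \<and> \<not> trivial_character (G i) (\<chi> i)"
    by metis
  define \<alpha> where "\<alpha> i = (if i \<in> S then \<chi> i else (\<lambda>_. 1))" for i
  have "char_family \<Omega> G \<alpha>"
    using \<chi> unfolding char_family_def \<alpha>_def character_def by auto
  moreover have "char_supp \<Omega> G \<alpha> = S"
    using \<chi> S unfolding char_supp_def \<alpha>_def trivial_character_def by auto
  ultimately show thesis
    by (rule that)
qed

section \<open>The coefficients and the degree of F\<close>

definition nonunit_sum :: "('b \<Rightarrow> ('a, 'c) monoid_scheme) \<Rightarrow> ('b \<Rightarrow> 'a \<Rightarrow> complex) \<Rightarrow> 'b \<Rightarrow> complex" where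
  "nonunit_sum G \<alpha> i = (\<Sum>h\<in>carrier (G i) - {\<one>\<^bsub>G i\<^esub>}. \<alpha> i h)"

lemma sum_char_eval_fixed_supp:
  assumes fin: "finite \<Omega>" and grp: "\<And>i. i \<in> \<Omega> \<Longrightarrow> group (G i)"
    and fcar: "\<And>i. i \<in> \<Omega> \<Longrightarrow> finite (carrier (G i))"
    and \<alpha>: "char_family \<Omega> G \<alpha>" and T: "T \<subseteq> \<Omega>"
  shows "(\<Sum>\<beta>\<in>{\<beta>\<in>codewords \<Omega> G. cw_supp \<Omega> G \<beta> = T}. char_eval \<Omega> \<alpha> \<beta>) =
    (\<Prod>i\<in>T. nonunit_sum G \<alpha> i)"
proof -
  define A where "A i = (if i \<in> T then carrier (G i) - {\<one>\<^bsub>G i\<^esub>} else {\<one>\<^bsub>G i\<^esub>})" for i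
  have one: "\<one>\<^bsub>G i\<^esub> \<in> carrier (G i)" if "i \<in> \<Omega>" for i
    using grp[OF that] by (simp add: group.is_monoid monoid.one_closed)
  have "{\<beta>\<in>codewords \<Omega> G. cw_supp \<Omega> G \<beta> = T} = (\<Pi>\<^sub>E i\<in>\<Omega>. A i)"
    using one T unfolding codewords_def cw_supp_def A_def
    by (auto simp: PiE_iff extensional_def split: if_splits) metis
  then have "(\<Sum>\<beta>\<in>{\<beta>\<in>codewords \<Omega> G. cw_supp \<Omega> G \<beta> = T}. char_eval \<Omega> \<alpha> \<beta>) =
      (\<Prod>i\<in>\<Omega>. \<Sum>a\<in>A i. \<alpha> i a)"
    unfolding char_eval_def using fin fcar by (simp add: prod_sum_PiE A_def)
  also have "\<dots> = (\<Prod>i\<in>\<Omega>. if i \<in> T then nonunit_sum G \<alpha> i else 1)"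
  proof (rule prod.cong[OF refl])
    fix i assume i: "i \<in> \<Omega>"
    have "\<alpha> i \<one>\<^bsub>G i\<^esub> = 1"
      using group.character_one[OF grp[OF i]] \<alpha> i unfolding char_family_def by blast
    then show "(\<Sum>a\<in>A i. \<alpha> i a) = (if i \<in> T then nonunit_sum G \<alpha> i else 1)"
      unfolding A_def nonunit_sum_def by simp
  qed
  also have "\<dots> = (\<Prod>i\<in>T. nonunit_sum G \<alpha> i)"
    using fin T by (simp add: prod.If_cases Int_absorb1)
  finally show ?thesis .
qed

lemma coeff_F_poly:
  assumes fin: "finite \<Omega>"
  shows "coeff (F_poly \<Omega> G leq \<alpha>) l =
    (\<Sum>\<beta>\<in>{\<beta>\<in>codewords \<Omega> G. wt \<Omega> leq (cw_supp \<Omega> G \<beta>) = l}. char_eval \<Omega> \<alpha> \<beta>)"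
proof (cases "l \<le> card \<Omega>")
  case True
  then show ?thesis
    unfolding F_poly_def coeff_sum coeff_monom by (simp add: sum.delta)
next
  case False
  have "wt \<Omega> leq X \<le> card \<Omega>" for X
    unfolding wt_def ideal_gen_def using fin by (intro card_mono) auto
  with False have "{\<beta>\<in>codewords \<Omega> G. wt \<Omega> leq (cw_supp \<Omega> G \<beta>) = l} = {}"
    by force
  then have "(\<Sum>\<beta>\<in>{\<beta>\<in>codewords \<Omega> G. wt \<Omega> leq (cw_supp \<Omega> G \<beta>) = l}. char_eval \<Omega> \<alpha> \<beta>) = 0"
    by (simp only: sum.empty)
  with False show ?thesis
    unfolding F_poly_def coeff_sum coeff_monom by (simp add: sum.delta)
qed

lemma coeff_F_poly_eq_sum_subsets:
  assumes fin: "finite \<Omega>" and grp: "\<And>i. i \<in> \<Omega> \<Longrightarrow> group (G i)"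
    and fcar: "\<And>i. i \<in> \<Omega> \<Longrightarrow> finite (carrier (G i))"
    and \<alpha>: "char_family \<Omega> G \<alpha>"
  shows "coeff (F_poly \<Omega> G leq \<alpha>) l =
    (\<Sum>T\<in>{T\<in>Pow \<Omega>. wt \<Omega> leq T = l}. \<Prod>i\<in>T. nonunit_sum G \<alpha> i)"
proof -
  let ?B = "{\<beta>\<in>codewords \<Omega> G. wt \<Omega> leq (cw_supp \<Omega> G \<beta>) = l}"
  have "finite (codewords \<Omega> G)"
    unfolding codewords_def using fin fcar by (intro finite_PiE) auto
  then have "(\<Sum>\<beta>\<in>?B. char_eval \<Omega> \<alpha> \<beta>) =
      (\<Sum>T\<in>{T\<in>Pow \<Omega>. wt \<Omega> leq T = l}. \<Sum>\<beta>\<in>{\<beta>\<in>?B. cw_supp \<Omega> G \<beta> = T}. char_eval \<Omega> \<alpha> \<beta>)"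
    using fin by (intro sum.group[symmetric]) (auto simp: cw_supp_def)
  also have "\<dots> = (\<Sum>T\<in>{T\<in>Pow \<Omega>. wt \<Omega> leq T = l}. \<Prod>i\<in>T. nonunit_sum G \<alpha> i)"
  proof (rule sum.cong[OF refl])
    fix T assume T: "T \<in> {T\<in>Pow \<Omega>. wt \<Omega> leq T = l}"
    then have "{\<beta>\<in>?B. cw_supp \<Omega> G \<beta> = T} = {\<beta>\<in>codewords \<Omega> G. cw_supp \<Omega> G \<beta> = T}"
      by auto
    with T show "(\<Sum>\<beta>\<in>{\<beta>\<in>?B. cw_supp \<Omega> G \<beta> = T}. char_eval \<Omega> \<alpha> \<beta>) = (\<Prod>i\<in>T. nonunit_sum G \<alpha> i)"
      using sum_char_eval_fixed_supp[OF fin grp fcar \<alpha>] by auto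
  qed
  finally show ?thesis
    by (simp add: coeff_F_poly[OF fin])
qed

lemma sum_subsets_by_ideal_gen:
  assumes fin: "finite \<Omega>" and P: "is_poset \<Omega> leq"
  shows "(\<Sum>T\<in>{T\<in>Pow \<Omega>. wt \<Omega> leq T = l}. w T) =
    (\<Sum>I\<in>{I. down_closed \<Omega> leq I \<and> card I = l}. \<Sum>T\<in>{T\<in>Pow \<Omega>. ideal_gen \<Omega> leq T = I}. w T)"
proof -
  have "finite {I. down_closed \<Omega> leq I \<and> card I = l}"
    by (rule finite_subset[of _ "Pow \<Omega>"]) (auto simp: down_closed_def fin)
  moreover have "ideal_gen \<Omega> leq ` {T\<in>Pow \<Omega>. wt \<Omega> leq T = l} \<subseteq> {I. down_closed \<Omega> leq I \<and> card I = l}"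
    using ideal_gen_down_closed[OF P] by (auto simp: wt_def)
  ultimately have "(\<Sum>T\<in>{T\<in>Pow \<Omega>. wt \<Omega> leq T = l}. w T) =
      (\<Sum>I\<in>{I. down_closed \<Omega> leq I \<and> card I = l}.
         \<Sum>T\<in>{T\<in>{T\<in>Pow \<Omega>. wt \<Omega> leq T = l}. ideal_gen \<Omega> leq T = I}. w T)"
    using fin by (intro sum.group[symmetric]) auto
  also have "\<dots> = (\<Sum>I\<in>{I. down_closed \<Omega> leq I \<and> card I = l}.
      \<Sum>T\<in>{T\<in>Pow \<Omega>. ideal_gen \<Omega> leq T = I}. w T)"
    by (intro sum.cong refl arg_cong2[where f = sum]) (auto simp: wt_def)
  finally show ?thesis .
qed

lemma sum_prod_ideal_gen_eq:
  fixes e :: "'b \<Rightarrow> 'c::comm_semiring_1"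
  assumes fin: "finite \<Omega>" and P: "is_poset \<Omega> leq" and I: "down_closed \<Omega> leq I"
  shows "(\<Sum>T\<in>{T\<in>Pow \<Omega>. ideal_gen \<Omega> leq T = I}. \<Prod>i\<in>T. e i) =
    (\<Prod>i\<in>maximal_elems leq I. e i) * (\<Prod>i\<in>I - maximal_elems leq I. 1 + e i)"
proof -
  let ?M = "maximal_elems leq I"
  have IO: "I \<subseteq> \<Omega>"
    using I unfolding down_closed_def by blast
  have finI: "finite I"
    using IO fin by (rule finite_subset)
  have MI: "?M \<subseteq> I"
    unfolding maximal_elems_def by blast
  have "T \<in> {T\<in>Pow \<Omega>. ideal_gen \<Omega> leq T = I} \<longleftrightarrow> ?M \<subseteq> T \<and> T \<subseteq> I" for T
  proof (cases "T \<subseteq> \<Omega>")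
    case True
    then show ?thesis
      using ideal_gen_eq_iff[OF P fin I True] by simp
  qed (use IO in blast)
  moreover have "?M \<subseteq> T \<and> T \<subseteq> I \<longleftrightarrow> T \<in> (\<lambda>R. ?M \<union> R) ` Pow (I - ?M)" for T
  proof
    assume "?M \<subseteq> T \<and> T \<subseteq> I"
    then have "T = ?M \<union> (T - ?M)" "T - ?M \<in> Pow (I - ?M)"
      by auto
    then show "T \<in> (\<lambda>R. ?M \<union> R) ` Pow (I - ?M)"
      by (rule image_eqI)
  qed (use MI in auto)
  ultimately have "{T\<in>Pow \<Omega>. ideal_gen \<Omega> leq T = I} = (\<lambda>R. ?M \<union> R) ` Pow (I - ?M)"
    by (intro Set.set_eqI) simp
  moreover have "inj_on (\<lambda>R. ?M \<union> R) (Pow (I - ?M))"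
    by (rule inj_onI) blast
  ultimately have "(\<Sum>T\<in>{T\<in>Pow \<Omega>. ideal_gen \<Omega> leq T = I}. \<Prod>i\<in>T. e i) =
      (\<Sum>R\<in>Pow (I - ?M). \<Prod>i\<in>?M \<union> R. e i)"
    by (simp add: sum.reindex)
  also have "\<dots> = (\<Sum>R\<in>Pow (I - ?M). (\<Prod>i\<in>?M. e i) * (\<Prod>i\<in>R. e i))"
    using finI MI by (intro sum.cong refl prod.union_disjoint) (auto dest: finite_subset)
  also have "\<dots> = (\<Prod>i\<in>?M. e i) * (\<Prod>i\<in>I - ?M. 1 + e i)"
    using prod_add[of "I - ?M" e "\<lambda>_. 1"] finI by (simp add: sum_distrib_left add.commute)
  finally show ?thesis .
qed

lemma degree_eq_card_of_coeff_sum: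
  fixes p :: "'a::comm_monoid_add poly"
  assumes coeff: "\<And>l. coeff p l = (\<Sum>I\<in>{I. D I \<and> card I = l}. g I)"
    and D: "finite {I. D I}" and J: "D J" "finite J"
    and nonzero_iff: "\<And>I. D I \<Longrightarrow> g I \<noteq> 0 \<longleftrightarrow> I \<subseteq> J"
  shows "degree p = card J"
proof -
  have vanish: "g I = 0" if I: "D I" "card J \<le> card I" "I \<noteq> J" for I
  proof (rule ccontr)
    assume "g I \<noteq> 0"
    then have "I \<subseteq> J"
      using nonzero_iff[OF I(1)] by blast
    moreover from this have "card I = card J"
      using I(2) card_mono[OF J(2)] by (simp add: le_antisym)
    ultimately show False
      using card_subset_eq[OF J(2)] I(3) by blast
  qed
  have "coeff p l = 0" if "card J < l" for l
    unfolding coeff using that by (intro sum.neutral ballI vanish) auto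
  moreover have "coeff p (card J) = g J"
  proof -
    have "coeff p (card J) = g J + (\<Sum>I\<in>{I. D I \<and> card I = card J} - {J}. g I)"
      unfolding coeff using D J by (intro sum.remove) auto
    also have "(\<Sum>I\<in>{I. D I \<and> card I = card J} - {J}. g I) = 0"
      using vanish by (intro sum.neutral) auto
    finally show ?thesis
      by simp
  qed
  moreover have "g J \<noteq> 0"
    using nonzero_iff[OF J(1)] by simp
  ultimately show ?thesis
    by (intro antisym degree_le le_degree) auto
qed

lemma coeff_F_poly_eq_sum_down_closed:
  assumes fin: "finite \<Omega>" and grp: "\<And>i. i \<in> \<Omega> \<Longrightarrow> group (G i)"
    and fcar: "\<And>i. i \<in> \<Omega> \<Longrightarrow> finite (carrier (G i))"
    and P: "is_poset \<Omega> leq" and \<alpha>: "char_family \<Omega> G \<alpha>"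
  shows "coeff (F_poly \<Omega> G leq \<alpha>) l = (\<Sum>I\<in>{I. down_closed \<Omega> leq I \<and> card I = l}.
    (\<Prod>i\<in>maximal_elems leq I. nonunit_sum G \<alpha> i) *
    (\<Prod>i\<in>I - maximal_elems leq I. 1 + nonunit_sum G \<alpha> i))"
proof -
  have "coeff (F_poly \<Omega> G leq \<alpha>) l =
      (\<Sum>T\<in>{T\<in>Pow \<Omega>. wt \<Omega> leq T = l}. \<Prod>i\<in>T. nonunit_sum G \<alpha> i)"
    by (rule coeff_F_poly_eq_sum_subsets[OF fin grp fcar \<alpha>])
  also have "\<dots> = (\<Sum>I\<in>{I. down_closed \<Omega> leq I \<and> card I = l}.
      \<Sum>T\<in>{T\<in>Pow \<Omega>. ideal_gen \<Omega> leq T = I}. \<Prod>i\<in>T. nonunit_sum G \<alpha> i)"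
    by (rule sum_subsets_by_ideal_gen[OF fin P])
  finally show ?thesis
    using sum_prod_ideal_gen_eq[OF fin P] by (auto intro: sum.cong)
qed

lemma prod_maximal_elems_ne_0_iff_subset_top_ideal:
  fixes e :: "'b \<Rightarrow> complex"
  assumes fin: "finite \<Omega>" and P: "is_poset \<Omega> leq" and S: "S \<subseteq> \<Omega>" and I: "down_closed \<Omega> leq I"
    and e_nonzero: "\<And>i. i \<in> \<Omega> \<Longrightarrow> e i \<noteq> 0"
    and one_plus_e_eq_0: "\<And>i. i \<in> \<Omega> \<Longrightarrow> 1 + e i = 0 \<longleftrightarrow> i \<in> S"
  shows "(\<Prod>i\<in>maximal_elems leq I. e i) * (\<Prod>i\<in>I - maximal_elems leq I. 1 + e i) \<noteq> 0 \<longleftrightarrow>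
    I \<subseteq> top_ideal \<Omega> leq S"
proof -
  have IO: "I \<subseteq> \<Omega>" and finI: "finite I"
    using I fin finite_subset unfolding down_closed_def by auto
  have MI: "maximal_elems leq I \<subseteq> I"
    by (auto simp: maximal_elems_def)
  have "(\<Prod>i\<in>maximal_elems leq I. e i) \<noteq> 0"
    by (simp add: prod_zero_iff finite_subset[OF MI finI]) (use MI IO e_nonzero in blast)
  moreover have "(\<Prod>i\<in>I - maximal_elems leq I. 1 + e i) \<noteq> 0 \<longleftrightarrow>
      S \<inter> (I - maximal_elems leq I) = {}"
    by (simp add: prod_zero_iff finI) (use IO one_plus_e_eq_0 in blast)
  ultimately show ?thesis
    using subset_top_ideal_iff[OF P S I] by simp
qed

lemma degree_F_poly:
  assumes fin: "finite \<Omega>" and grp: "\<And>i. i \<in> \<Omega> \<Longrightarrow> group (G i)"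
    and fcar: "\<And>i. i \<in> \<Omega> \<Longrightarrow> finite (carrier (G i))"
    and card_ge_2: "\<And>i. i \<in> \<Omega> \<Longrightarrow> 2 \<le> card (carrier (G i))"
    and P: "is_poset \<Omega> leq" and \<alpha>: "char_family \<Omega> G \<alpha>"
  shows "degree (F_poly \<Omega> G leq \<alpha>) =
    card \<Omega> - card (upset \<Omega> leq (char_supp \<Omega> G \<alpha>)) + card (minimal_elems leq (char_supp \<Omega> G \<alpha>))"
proof -
  define S where "S = char_supp \<Omega> G \<alpha>"
  have S: "S \<subseteq> \<Omega>"
    unfolding S_def char_supp_def by blast
  have e_nonzero: "nonunit_sum G \<alpha> i \<noteq> 0"
    and one_plus_e_eq_0: "1 + nonunit_sum G \<alpha> i = 0 \<longleftrightarrow> i \<in> S" if i: "i \<in> \<Omega>" for i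
  proof -
    have "of_nat (card (carrier (G i))) \<noteq> (0::complex)" "of_nat (card (carrier (G i))) \<noteq> (1::complex)"
      using card_ge_2[OF i] by simp_all
    then show "nonunit_sum G \<alpha> i \<noteq> 0" "1 + nonunit_sum G \<alpha> i = 0 \<longleftrightarrow> i \<in> S"
      using group.sum_character_nonunit[OF grp[OF i] fcar[OF i]] \<alpha> i
      unfolding nonunit_sum_def S_def char_supp_def char_family_def by auto
  qed
  have "finite {I. down_closed \<Omega> leq I}"
    by (rule finite_subset[of _ "Pow \<Omega>"]) (auto simp: down_closed_def fin)
  moreover have "down_closed \<Omega> leq (top_ideal \<Omega> leq S)" "finite (top_ideal \<Omega> leq S)"
    using top_ideal_down_closed[OF P S] fin finite_subset unfolding down_closed_def by auto
  moreover note coeff_F_poly_eq_sum_down_closed[OF fin grp fcar P \<alpha>]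
    prod_maximal_elems_ne_0_iff_subset_top_ideal[OF fin P S _ e_nonzero one_plus_e_eq_0]
  ultimately have "degree (F_poly \<Omega> G leq \<alpha>) = card (top_ideal \<Omega> leq S)"
    by (intro degree_eq_card_of_coeff_sum[where D = "down_closed \<Omega> leq"]) (simp_all del: mult_eq_0_iff)
  with card_top_ideal[OF fin P S] show ?thesis
    unfolding S_def by simp
qed

theorem theorem2p3:
  fixes \<Omega> :: "'b set" and G :: "'b \<Rightarrow> ('a, 'c) monoid_scheme"
    and leq :: "'b \<Rightarrow> 'b \<Rightarrow> bool"
  assumes "finite \<Omega>"
    and "\<And>i. i \<in> \<Omega> \<Longrightarrow> comm_group (G i)"
    and "\<And>i. i \<in> \<Omega> \<Longrightarrow> finite (carrier (G i))"
    and "\<And>i. i \<in> \<Omega> \<Longrightarrow> card (carrier (G i)) \<ge> 2"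
    and "is_poset \<Omega> leq"
  shows "hierarchical \<Omega> leq \<longleftrightarrow>
    (\<forall>\<alpha> \<gamma>. char_family \<Omega> G \<alpha> \<and> char_family \<Omega> G \<gamma> \<and>
        wt \<Omega> (dual_order leq) (char_supp \<Omega> G \<alpha>) = wt \<Omega> (dual_order leq) (char_supp \<Omega> G \<gamma>)
        \<longrightarrow> degree (F_poly \<Omega> G leq \<alpha>) = degree (F_poly \<Omega> G leq \<gamma>))"
proof -
  have grp: "group (G i)" if "i \<in> \<Omega>" for i
    using assms(2)[OF that] unfolding comm_group_def by blast
  have supp: "char_supp \<Omega> G \<alpha> \<subseteq> \<Omega>" for \<alpha>
    unfolding char_supp_def by blast
  have degree: "degree (F_poly \<Omega> G leq \<alpha>) = card \<Omega> - card (upset \<Omega> leq (char_supp \<Omega> G \<alpha>))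
      + card (minimal_elems leq (char_supp \<Omega> G \<alpha>))" if "char_family \<Omega> G \<alpha>" for \<alpha>
    using assms grp that by (intro degree_F_poly) auto
  show ?thesis (is "_ \<longleftrightarrow> ?degrees_agree")
    unfolding hierarchical_iff_upset_card_determines_minimal_card[OF assms(1,5)]
  proof
    assume "upset_card_determines_minimal_card \<Omega> leq"
    then show ?degrees_agree
      using degree supp unfolding upset_card_determines_minimal_card_def wt_def by (metis (no_types))
  next
    assume degrees_agree: ?degrees_agree
    show "upset_card_determines_minimal_card \<Omega> leq"
      unfolding upset_card_determines_minimal_card_def
    proof (intro allI impI)
      fix S S' assume S: "S \<subseteq> \<Omega>" and S': "S' \<subseteq> \<Omega>"
        and upset_eq: "card (upset \<Omega> leq S) = card (upset \<Omega> leq S')"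
      obtain \<alpha> where \<alpha>: "char_family \<Omega> G \<alpha>" "char_supp \<Omega> G \<alpha> = S"
        using char_family_with_supp[of \<Omega> G, OF assms(2,3,4) S] by blast
      obtain \<gamma> where \<gamma>: "char_family \<Omega> G \<gamma>" "char_supp \<Omega> G \<gamma> = S'"
        using char_family_with_supp[of \<Omega> G, OF assms(2,3,4) S'] by blast
      have "degree (F_poly \<Omega> G leq \<alpha>) = degree (F_poly \<Omega> G leq \<gamma>)"
        using degrees_agree \<alpha> \<gamma> upset_eq by (simp add: wt_def)
      then show "card (minimal_elems leq S) = card (minimal_elems leq S')"
        using degree[OF \<alpha>(1)] degree[OF \<gamma>(1)] \<alpha>(2) \<gamma>(2) upset_eq by simp
    qed
  qed
qed

end
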